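(* Let $k\ge1$. If $S\subseteq\mathbb R^n$ is the set of vertices of a $(k+1)$-level polytope, then $\mathcal I(S)$ is $\mathrm{TH}_k$-exact, i.e. $\mathrm{TH}_k(\mathcal I(S))=\operatorname{conv}(S)$.
   Context: For $S\subseteq\mathbb R^n$, $\mathcal I(S)$ is the ideal of all polynomials vanishing on $S$, and $\mathcal V_{\mathbb R}(I)$ is the real zero set of an ideal $I$. $\mathbb{R}[\mathbf x]_k$ denotes the polynomials of degree at most $k$. A polynomial $h$ is $k$-sos modulo $I$ if there are $g_1,\dots,g_r\in\mathbb{R}[\mathbf x]_k$ with $h-\sum_i g_i^2\in I$. The $k$-th theta body is $\mathrm{TH}_k(I)=\{p\in\mathbb R^n: l(p)\ge 0$ for every $l\in\mathbb{R}[\mathbf x]_1$ that is $k$-sos modulo $I\}$. $I$ is $\mathrm{TH}_k$-exact if $\mathrm{TH}_k(I)=\operatorname{cl}(\operatorname{conv}(\mathcal V_{\mathbb R}(I)))$. A polytope $P$ (facets taken relative to its affine hull) is $m$-level if for every facet $F$ of $P$ and the supporting hyperplane $H$ of $F$ there are $m-1$ hyperplanes $H_1,\dots,H_{m-1}$ parallel to $H$ such that all vertices of $P$ lie in $H\cup H_1\cup\dots\cup H_{m-1}$. *)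

theory Defs
  imports "HOL-Analysis.Analysis"
begin

text \<open>Real polynomials in n variables are represented by the polynomial functions
  they induce on real^n (over the infinite field R this is a bijection).\<close>

definition monomial_fun :: "('n::finite \<Rightarrow> nat) \<Rightarrow> real^'n \<Rightarrow> real" where
  "monomial_fun \<alpha> x = (\<Prod>i\<in>UNIV. (x $ i) ^ \<alpha> i)"

definition poly_deg_le :: "nat \<Rightarrow> (real^'n::finite \<Rightarrow> real) \<Rightarrow> bool" where
  "poly_deg_le k f \<longleftrightarrow>
     (\<exists>c :: ('n \<Rightarrow> nat) \<Rightarrow> real.
        finite {\<alpha>. c \<alpha> \<noteq> 0} \<and>
        (\<forall>\<alpha>. c \<alpha> \<noteq> 0 \<longrightarrow> sum \<alpha> UNIV \<le> k) \<and>
        f = (\<lambda>x. \<Sum>\<alpha>\<in>{\<alpha>. c \<alpha> \<noteq> 0}. c \<alpha> * monomial_fun \<alpha> x))"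

definition is_poly :: "(real^'n::finite \<Rightarrow> real) \<Rightarrow> bool" where
  "is_poly f \<longleftrightarrow> (\<exists>k. poly_deg_le k f)"

definition vanishing_ideal :: "(real^'n::finite) set \<Rightarrow> (real^'n \<Rightarrow> real) set" where
  "vanishing_ideal S = {f. is_poly f \<and> (\<forall>x\<in>S. f x = 0)}"

definition real_zero_set :: "(real^'n::finite \<Rightarrow> real) set \<Rightarrow> (real^'n) set" where
  "real_zero_set I = {x. \<forall>f\<in>I. f x = 0}"

definition k_sos_mod :: "nat \<Rightarrow> (real^'n::finite \<Rightarrow> real) set \<Rightarrow> (real^'n \<Rightarrow> real) \<Rightarrow> bool" where
  "k_sos_mod k I h \<longleftrightarrow>
     (\<exists>gs. (\<forall>g\<in>set gs. poly_deg_le k g) \<and> (\<lambda>x. h x - (\<Sum>g\<leftarrow>gs. (g x)^2)) \<in> I)"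

definition theta_body :: "nat \<Rightarrow> (real^'n::finite \<Rightarrow> real) set \<Rightarrow> (real^'n) set" where
  "theta_body k I = {p. \<forall>l. poly_deg_le 1 l \<longrightarrow> k_sos_mod k I l \<longrightarrow> 0 \<le> l p}"

definition TH_exact :: "nat \<Rightarrow> (real^'n::finite \<Rightarrow> real) set \<Rightarrow> bool" where
  "TH_exact k I \<longleftrightarrow> theta_body k I = closure (convex hull (real_zero_set I))"

text \<open>m-level polytope; facets are taken relative to the affine hull (facet_of).\<close>
definition m_level :: "nat \<Rightarrow> (real^'n::finite) set \<Rightarrow> bool" where
  "m_level m P \<longleftrightarrow> polytope P \<and>
     (\<forall>F. F facet_of P \<longrightarrow>
        (\<exists>a b. a \<noteq> 0 \<and> P \<subseteq> {x. a \<bullet> x \<le> b} \<and> F = P \<inter> {x. a \<bullet> x = b} \<and>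
           (\<exists>B. finite B \<and> card B \<le> m - 1 \<and>
              {v. v extreme_point_of P} \<subseteq> {x. a \<bullet> x = b} \<union> (\<Union>c\<in>B. {x. a \<bullet> x = c}))))"

end

theory Submission
  imports Defs
begin

(* Let S be the (finite) vertex set of a polytope P = conv S.  The inclusion
   conv S <= TH_k(I(S)) holds for every S, because theta bodies are convex and
   contain S.  For the reverse inclusion take p in TH_k(I(S)).
   (1) Every affine l vanishing on S is trivially k-sos mod I(S), so p lies in
       the affine hull of S, i.e. of P.
   (2) If p were outside P, a ray from a relative interior point towards p
       leaves P through some facet {a.x = b}, so a.p > b.
   (3) By (k+1)-levelness, l = b - a.x takes at most k+1 values on S, all
       nonnegative; the Lagrange interpolant g of sqrt at these values has
       degree <= k and g^2 = l on S, so l is k-sos mod I(S) and l(p) >= 0,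
       contradicting (2).  Since I(S) has real zero set S for finite S, exactness follows. *)

(* A finite coefficient family on monomials of degree at most k defines an element of R[x]_k;
   unlike the definition, the support need not be exactly the nonzero coefficients. *)
lemma poly_intro:
  assumes "finite A" "\<forall>\<alpha>\<in>A. sum \<alpha> UNIV \<le> k"
    "\<And>x. f x = (\<Sum>\<alpha>\<in>A. c \<alpha> * monomial_fun \<alpha> x)"
  shows "poly_deg_le k f"
proof -
  define c' where "c' \<alpha> = (if \<alpha> \<in> A then c \<alpha> else 0)" for \<alpha>
  have sub: "{\<alpha>. c' \<alpha> \<noteq> 0} \<subseteq> A" by (auto simp: c'_def split: if_splits)
  have "f x = (\<Sum>\<alpha>\<in>{\<alpha>. c' \<alpha> \<noteq> 0}. c' \<alpha> * monomial_fun \<alpha> x)" for x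
  proof -
    have "f x = (\<Sum>\<alpha>\<in>A. c' \<alpha> * monomial_fun \<alpha> x)" using assms(3) by (simp add: c'_def)
    also have "\<dots> = (\<Sum>\<alpha>\<in>{\<alpha>. c' \<alpha> \<noteq> 0}. c' \<alpha> * monomial_fun \<alpha> x)"
      by (rule sum.mono_neutral_right[OF assms(1) sub]) auto
    finally show ?thesis .
  qed
  then show ?thesis unfolding poly_deg_le_def
    using sub assms(1,2) finite_subset by (intro exI[of _ c']) (auto simp: c'_def split: if_splits)
qed

lemma poly_elim:
  assumes "poly_deg_le k f"
  obtains A c where "finite A" "\<forall>\<alpha>\<in>A. sum \<alpha> UNIV \<le> k"
    "\<And>x. f x = (\<Sum>\<alpha>\<in>A. c \<alpha> * monomial_fun \<alpha> x)"
  using assms unfolding poly_deg_le_def by force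

lemma poly_mono: "poly_deg_le k f \<Longrightarrow> k \<le> k' \<Longrightarrow> poly_deg_le k' f"
  unfolding poly_deg_le_def by (blast intro: le_trans)

lemma poly_single: "sum \<alpha> UNIV \<le> k \<Longrightarrow> poly_deg_le k (\<lambda>x. c * monomial_fun \<alpha> x)"
  by (rule poly_intro[of "{\<alpha>}" _ _ "\<lambda>_. c"]) auto

lemma poly_const: "poly_deg_le k (\<lambda>x. c)"
proof -
  have "poly_deg_le 0 (\<lambda>x. c * monomial_fun (\<lambda>_. 0) x)" by (rule poly_single) simp
  then show ?thesis by (simp add: monomial_fun_def) (erule poly_mono, simp)
qed

lemma poly_coord: "poly_deg_le 1 (\<lambda>x. x $ i)"
proof -
  have "poly_deg_le 1 (\<lambda>x. 1 * monomial_fun (\<lambda>j. if j = i then 1 else 0) x)"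
    by (rule poly_single) (simp add: sum.delta)
  moreover have "monomial_fun (\<lambda>j. if j = i then 1 else 0) x = x $ i" for x
  proof -
    have "monomial_fun (\<lambda>j. if j = i then 1 else 0) x = (\<Prod>j\<in>UNIV. if j = i then x $ j else 1)"
      unfolding monomial_fun_def by (intro prod.cong) auto
    also have "\<dots> = x $ i" by (simp add: prod.delta)
    finally show ?thesis .
  qed
  ultimately show ?thesis by simp
qed

lemma poly_add:
  assumes "poly_deg_le k f" "poly_deg_le k g"
  shows "poly_deg_le k (\<lambda>x. f x + g x)"
proof -
  obtain A c where A: "finite A" "\<forall>\<alpha>\<in>A. sum \<alpha> UNIV \<le> k"
    "\<And>x. f x = (\<Sum>\<alpha>\<in>A. c \<alpha> * monomial_fun \<alpha> x)" using poly_elim[OF assms(1)] by blast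
  obtain B d where B: "finite B" "\<forall>\<alpha>\<in>B. sum \<alpha> UNIV \<le> k"
    "\<And>x. g x = (\<Sum>\<alpha>\<in>B. d \<alpha> * monomial_fun \<alpha> x)" using poly_elim[OF assms(2)] by blast
  show ?thesis
  proof (rule poly_intro[of "A \<union> B" _ _ "\<lambda>\<alpha>. (if \<alpha> \<in> A then c \<alpha> else 0) + (if \<alpha> \<in> B then d \<alpha> else 0)"])
    fix x
    have e1: "(if \<alpha> \<in> A then c \<alpha> else 0) * monomial_fun \<alpha> x = (if \<alpha> \<in> A then c \<alpha> * monomial_fun \<alpha> x else 0)" for \<alpha> by simp
    have e2: "(if \<alpha> \<in> B then d \<alpha> else 0) * monomial_fun \<alpha> x = (if \<alpha> \<in> B then d \<alpha> * monomial_fun \<alpha> x else 0)" for \<alpha> by simp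
    have 1: "(\<Sum>\<alpha>\<in>A \<union> B. (if \<alpha> \<in> A then c \<alpha> else 0) * monomial_fun \<alpha> x) = f x"
      using sum.inter_restrict[of "A \<union> B" "\<lambda>\<alpha>. c \<alpha> * monomial_fun \<alpha> x" A] A B
      by (simp only: e1) (simp add: Int_absorb1)
    have 2: "(\<Sum>\<alpha>\<in>A \<union> B. (if \<alpha> \<in> B then d \<alpha> else 0) * monomial_fun \<alpha> x) = g x"
      using sum.inter_restrict[of "A \<union> B" "\<lambda>\<alpha>. d \<alpha> * monomial_fun \<alpha> x" B] A B
      by (simp only: e2) (simp add: Int_absorb2)
    show "f x + g x = (\<Sum>\<alpha>\<in>A \<union> B. ((if \<alpha> \<in> A then c \<alpha> else 0) + (if \<alpha> \<in> B then d \<alpha> else 0)) * monomial_fun \<alpha> x)"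
      by (simp only: distrib_right sum.distrib 1 2)
  qed (use A B in auto)
qed

lemma poly_cmul:
  assumes "poly_deg_le k f"
  shows "poly_deg_le k (\<lambda>x. a * f x)"
proof -
  obtain A c where A: "finite A" "\<forall>\<alpha>\<in>A. sum \<alpha> UNIV \<le> k"
    "\<And>x. f x = (\<Sum>\<alpha>\<in>A. c \<alpha> * monomial_fun \<alpha> x)" using poly_elim[OF assms(1)] by blast
  show ?thesis
    by (rule poly_intro[of A _ _ "\<lambda>\<alpha>. a * c \<alpha>"]) (use A in \<open>auto simp: sum_distrib_left mult.assoc\<close>)
qed

lemma poly_sum:
  assumes "finite X" "\<And>i. i \<in> X \<Longrightarrow> poly_deg_le k (f i)"
  shows "poly_deg_le k (\<lambda>x. \<Sum>i\<in>X. f i x)"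
  using assms
proof (induction X rule: finite_induct)
  case empty then show ?case using poly_const[of k 0] by simp
next
  case (insert a F)
  then show ?case by (simp add: poly_add)
qed

lemma monomial_fun_add: "monomial_fun (\<lambda>i. \<alpha> i + \<beta> i) x = monomial_fun \<alpha> x * monomial_fun \<beta> x"
  unfolding monomial_fun_def by (simp add: power_add prod.distrib)

lemma poly_mult:
  assumes "poly_deg_le j f" "poly_deg_le k g"
  shows "poly_deg_le (j + k) (\<lambda>x. f x * g x)"
proof -
  obtain A c where A: "finite A" "\<forall>\<alpha>\<in>A. sum \<alpha> UNIV \<le> j"
    "\<And>x. f x = (\<Sum>\<alpha>\<in>A. c \<alpha> * monomial_fun \<alpha> x)" using poly_elim[OF assms(1)] by blast
  obtain B d where B: "finite B" "\<forall>\<alpha>\<in>B. sum \<alpha> UNIV \<le> k"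
    "\<And>x. g x = (\<Sum>\<alpha>\<in>B. d \<alpha> * monomial_fun \<alpha> x)" using poly_elim[OF assms(2)] by blast
  have eq: "f x * g x = (\<Sum>p\<in>A \<times> B. (c (fst p) * d (snd p)) * monomial_fun (\<lambda>i. fst p i + snd p i) x)" for x
    by (simp add: A(3) B(3) sum_product sum.cartesian_product monomial_fun_add mult_ac case_prod_beta)
  have "poly_deg_le (j + k) (\<lambda>x. \<Sum>p\<in>A \<times> B. (c (fst p) * d (snd p)) * monomial_fun (\<lambda>i. fst p i + snd p i) x)"
  proof (rule poly_sum)
    fix p assume p: "p \<in> A \<times> B"
    show "poly_deg_le (j + k) (\<lambda>x. (c (fst p) * d (snd p)) * monomial_fun (\<lambda>i. fst p i + snd p i) x)"
    proof (rule poly_single)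
      have "sum (fst p) UNIV \<le> j" "sum (snd p) UNIV \<le> k" using p A(2) B(2) by auto
      then show "sum (\<lambda>i. fst p i + snd p i) UNIV \<le> j + k" by (simp only: sum.distrib)
    qed
  qed (use A B in simp)
  moreover have "(\<lambda>x. f x * g x) = (\<lambda>x. \<Sum>p\<in>A \<times> B. (c (fst p) * d (snd p)) * monomial_fun (\<lambda>i. fst p i + snd p i) x)"
    using eq by (rule ext)
  ultimately show ?thesis by simp
qed

lemma poly_prod:
  assumes "finite X" "\<And>i. i \<in> X \<Longrightarrow> poly_deg_le 1 (f i)"
  shows "poly_deg_le (card X) (\<lambda>x. \<Prod>i\<in>X. f i x)"
  using assms
proof (induction X rule: finite_induct)
  case empty then show ?case using poly_const[of 0 1] by simp
next
  case (insert a F)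
  then show ?case using poly_mult[of 1 "f a" "card F" "\<lambda>x. \<Prod>i\<in>F. f i x"] by simp
qed

lemma poly_affine: "poly_deg_le 1 (\<lambda>x. c + a \<bullet> x)"
proof -
  have "poly_deg_le 1 (\<lambda>x. \<Sum>i\<in>UNIV. a $ i * x $ i)"
  proof (rule poly_sum)
    fix i show "poly_deg_le 1 (\<lambda>x. a $ i * x $ i)" using poly_cmul[OF poly_coord[of i], of "a $ i"] .
  qed simp
  then have "poly_deg_le 1 (\<lambda>x. c + (\<Sum>i\<in>UNIV. a $ i * x $ i))"
    by (rule poly_add[OF poly_const])
  then show ?thesis by (simp add: inner_vec_def)
qed

lemma monomial_affine:
  assumes "sum \<alpha> UNIV \<le> 1"
  shows "\<exists>c (a::real^'n::finite). \<forall>x. monomial_fun \<alpha> x = c + a \<bullet> x"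
proof (cases "\<forall>i. \<alpha> i = 0")
  case True
  then show ?thesis by (intro exI[of _ 1] exI[of _ 0]) (simp add: monomial_fun_def)
next
  case False
  then obtain i where i: "\<alpha> i \<noteq> 0" by auto
  have le: "\<alpha> i + \<alpha> j \<le> sum \<alpha> UNIV" if "j \<noteq> i" for j
  proof -
    have "sum \<alpha> {i, j} \<le> sum \<alpha> UNIV" by (rule sum_mono2) auto
    then show ?thesis using that by simp
  qed
  have "\<alpha> i \<le> sum \<alpha> UNIV" by (rule member_le_sum) auto
  then have ai: "\<alpha> i = 1" using assms i by linarith
  have aj: "\<alpha> j = 0" if "j \<noteq> i" for j using le[OF that] ai assms by linarith
  have "monomial_fun \<alpha> x = (\<Prod>j\<in>UNIV. if j = i then x $ j else 1)" for x
    unfolding monomial_fun_def by (intro prod.cong) (auto simp: ai aj)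
  then have m: "monomial_fun \<alpha> x = x $ i" for x by (simp add: prod.delta)
  have "(\<chi> j. if j = i then 1 else 0) \<bullet> x = x $ i" for x :: "real^'n"
  proof -
    have "(\<chi> j. if j = i then 1 else 0) \<bullet> x = (\<Sum>j\<in>UNIV. if j = i then x $ j else 0)"
      unfolding inner_vec_def by (intro sum.cong) auto
    then show ?thesis by simp
  qed
  then show ?thesis using m by (intro exI[of _ 0] exI[of _ "\<chi> j. if j = i then 1 else 0"]) simp
qed

lemma poly1_affine:
  assumes "poly_deg_le 1 l"
  shows "\<exists>c (a::real^'n::finite). \<forall>x. l x = c + a \<bullet> x"
proof -
  obtain A c where A: "finite A" "\<forall>\<alpha>\<in>A. sum \<alpha> UNIV \<le> 1"
    "\<And>x. l x = (\<Sum>\<alpha>\<in>A. c \<alpha> * monomial_fun \<alpha> x)" using poly_elim[OF assms] by blast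
  have "\<forall>\<alpha>\<in>A. \<exists>p. \<forall>x::real^'n. monomial_fun \<alpha> x = fst p + snd p \<bullet> x"
    using monomial_affine A(2) by fastforce
  then obtain P where P: "\<And>\<alpha> x. \<alpha> \<in> A \<Longrightarrow> monomial_fun \<alpha> (x::real^'n) = fst (P \<alpha>) + snd (P \<alpha>) \<bullet> x"
    by metis
  have "l x = (\<Sum>\<alpha>\<in>A. c \<alpha> * fst (P \<alpha>)) + (\<Sum>\<alpha>\<in>A. c \<alpha> *\<^sub>R snd (P \<alpha>)) \<bullet> x" for x
  proof -
    have "l x = (\<Sum>\<alpha>\<in>A. c \<alpha> * (fst (P \<alpha>) + snd (P \<alpha>) \<bullet> x))"
      unfolding A(3) by (intro sum.cong refl) (simp add: P)
    also have "\<dots> = (\<Sum>\<alpha>\<in>A. c \<alpha> * fst (P \<alpha>)) + (\<Sum>\<alpha>\<in>A. c \<alpha> * (snd (P \<alpha>) \<bullet> x))"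
      by (simp only: distrib_left sum.distrib)
    also have "(\<Sum>\<alpha>\<in>A. c \<alpha> * (snd (P \<alpha>) \<bullet> x)) = (\<Sum>\<alpha>\<in>A. c \<alpha> *\<^sub>R snd (P \<alpha>)) \<bullet> x"
      by (simp only: inner_sum_left inner_scaleR_left)
    finally show ?thesis .
  qed
  then show ?thesis by blast
qed

lemma vanishing_idealI:
  "poly_deg_le d f \<Longrightarrow> (\<And>x. x \<in> S \<Longrightarrow> f x = 0) \<Longrightarrow> f \<in> vanishing_ideal S"
  unfolding vanishing_ideal_def is_poly_def by blast

(* For finite S the real zero set of I(S) is S itself: a point x outside S is
   separated by the product of the affine functions y |-> (x - s).(y - s). *)
lemma real_zero_set_vanishing_ideal:
  assumes "finite S"
  shows "real_zero_set (vanishing_ideal S) = S"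
proof
  show "S \<subseteq> real_zero_set (vanishing_ideal S)"
    unfolding real_zero_set_def vanishing_ideal_def by auto
next
  show "real_zero_set (vanishing_ideal S) \<subseteq> S"
  proof
    fix x assume x: "x \<in> real_zero_set (vanishing_ideal S)"
    show "x \<in> S"
    proof (rule ccontr)
      assume xS: "x \<notin> S"
      define f where "f y = (\<Prod>s\<in>S. (- ((x - s) \<bullet> s)) + (x - s) \<bullet> y)" for y
      have "poly_deg_le (card S) f"
        unfolding f_def by (rule poly_prod[OF assms]) (rule poly_affine)
      moreover have "f y = 0" if "y \<in> S" for y
        unfolding f_def using assms that by (intro prod_zero) (auto simp: inner_commute)
      ultimately have "f \<in> vanishing_ideal S" by (rule vanishing_idealI)
      then have "f x = 0" using x unfolding real_zero_set_def by blast
      moreover have "(- ((x - s) \<bullet> s)) + (x - s) \<bullet> x \<noteq> 0" if "s \<in> S" for s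
      proof -
        have "(- ((x - s) \<bullet> s)) + (x - s) \<bullet> x = (x - s) \<bullet> (x - s)"
          by (simp add: inner_diff_right)
        moreover have "x - s \<noteq> 0" using xS that by auto
        ultimately show ?thesis by simp
      qed
      ultimately show False unfolding f_def using assms by (simp add: prod_zero_iff)
    qed
  qed
qed

lemma theta_body_nonneg:
  "p \<in> theta_body k I \<Longrightarrow> poly_deg_le 1 l \<Longrightarrow> k_sos_mod k I l \<Longrightarrow> 0 \<le> l p"
  unfolding theta_body_def by blast

lemma k_sos_mod_vanishing:
  "poly_deg_le 1 l \<Longrightarrow> (\<And>x. x \<in> S \<Longrightarrow> l x = 0) \<Longrightarrow> k_sos_mod k (vanishing_ideal S) l"
  unfolding k_sos_mod_def by (intro exI[of _ "[]"]) (auto intro: vanishing_idealI)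

lemma k_sos_mod_square:
  assumes g: "poly_deg_le k g" and h: "poly_deg_le (k + k) h"
    and eq: "\<And>x. x \<in> S \<Longrightarrow> h x = (g x)^2"
  shows "k_sos_mod k (vanishing_ideal S) h"
proof -
  have "poly_deg_le (k + k) (\<lambda>x. h x + (-1) * (g x * g x))"
    by (intro poly_add[OF h] poly_cmul poly_mult[OF g g])
  moreover have "(\<lambda>x. h x + (-1) * (g x * g x)) = (\<lambda>x. h x - (\<Sum>g\<leftarrow>[g]. (g x)^2))"
    by (simp add: power2_eq_square)
  ultimately have "(\<lambda>x. h x - (\<Sum>g\<leftarrow>[g]. (g x)^2)) \<in> vanishing_ideal S"
    by (intro vanishing_idealI[of "k + k"]) (simp_all add: eq)
  then show ?thesis unfolding k_sos_mod_def using g by (intro exI[of _ "[g]"]) simp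
qed

(* Key algebraic step: if a linear l takes only finitely many values on S, at most
   k+1 of them and all nonnegative, then sqrt(l) restricted to S is interpolated
   by a polynomial of degree <= k (Lagrange interpolation of sqrt on l(S)). *)
lemma sqrt_interpolation:
  fixes l :: "real^'n::finite \<Rightarrow> real"
  assumes l: "poly_deg_le 1 l" and fin: "finite (l ` S)" and card: "card (l ` S) \<le> k + 1"
    and nonneg: "\<And>x. x \<in> S \<Longrightarrow> 0 \<le> l x"
  obtains g where "poly_deg_le k g" "\<And>x. x \<in> S \<Longrightarrow> (g x)^2 = l x"
proof -
  define T where "T = l ` S"
  have finT: "finite T" using fin T_def by simp
  define basis where "basis v x = (\<Prod>w\<in>T - {v}. (l x - w) / (v - w))" for v x
  define g where "g x = (\<Sum>v\<in>T. sqrt v * basis v x)" for x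
  have factor: "poly_deg_le 1 (\<lambda>x. (l x - w) / (v - w))" for v w
  proof -
    have "poly_deg_le 1 (\<lambda>x. (1 / (v - w)) * l x + (- w / (v - w)))"
      by (rule poly_add[OF poly_cmul[OF l] poly_const])
    then show ?thesis by (simp add: diff_divide_distrib)
  qed
  have "poly_deg_le k g"
    unfolding g_def
  proof (rule poly_sum[OF finT])
    fix v assume v: "v \<in> T"
    have "poly_deg_le (card (T - {v})) (basis v)"
      unfolding basis_def by (rule poly_prod) (use finT factor in auto)
    moreover have "card (T - {v}) \<le> k" using card v finT T_def by (simp add: card_Diff_singleton)
    ultimately show "poly_deg_le k (\<lambda>x. sqrt v * basis v x)"
      by (intro poly_cmul) (rule poly_mono)
  qed
  moreover have "(g x)^2 = l x" if x: "x \<in> S" for x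
  proof -
    define t where "t = l x"
    have t: "t \<in> T" using x T_def t_def by simp
    have "basis t x = 1" unfolding basis_def by (rule prod.neutral) (auto simp: t_def)
    moreover have "basis v x = 0" if "v \<in> T - {t}" for v
      unfolding basis_def by (rule prod_zero) (use finT t that t_def in auto)
    then have "(\<Sum>v\<in>T - {t}. sqrt v * basis v x) = 0" by simp
    ultimately have "g x = sqrt t"
      unfolding g_def using sum.remove[OF finT t, of "\<lambda>v. sqrt v * basis v x"] by simp
    then show ?thesis using nonneg x t_def by simp
  qed
  ultimately show ?thesis using that by blast
qed

(* The theta body of any ideal is convex, since the constraints are affine. *)
lemma theta_body_convex: "convex (theta_body k I)"
  unfolding convex_def
proof (intro ballI allI impI)
  fix p q and u v :: real
  assume p: "p \<in> theta_body k I" and q: "q \<in> theta_body k I"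
    and uv: "0 \<le> u" "0 \<le> v" "u + v = 1"
  show "u *\<^sub>R p + v *\<^sub>R q \<in> theta_body k I"
    unfolding theta_body_def
  proof (intro CollectI allI impI)
    fix l assume l: "poly_deg_le 1 l" "k_sos_mod k I l"
    obtain c a where ca: "\<And>x. l x = c + a \<bullet> x" using poly1_affine[OF l(1)] by blast
    have "0 \<le> u * l p + v * l q"
      using theta_body_nonneg[OF p l] theta_body_nonneg[OF q l] uv by simp
    also have "l (u *\<^sub>R p + v *\<^sub>R q) = (u + v) * c + u * (a \<bullet> p) + v * (a \<bullet> q)"
      unfolding ca uv(3) by (simp add: inner_add_right)
    then have "u * l p + v * l q = l (u *\<^sub>R p + v *\<^sub>R q)"
      unfolding ca by (simp add: algebra_simps)
    finally show "0 \<le> l (u *\<^sub>R p + v *\<^sub>R q)" .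
  qed
qed

(* The easy inclusion conv S <= TH_k(I(S)): sums of squares are nonnegative on S. *)
lemma convex_hull_subset_theta_body:
  "convex hull S \<subseteq> theta_body k (vanishing_ideal S)"
proof (rule hull_minimal)
  show "convex (theta_body k (vanishing_ideal S))" by (rule theta_body_convex)
  show "S \<subseteq> theta_body k (vanishing_ideal S)"
  proof
    fix p assume p: "p \<in> S"
    show "p \<in> theta_body k (vanishing_ideal S)"
      unfolding theta_body_def
    proof (intro CollectI allI impI)
      fix l assume "poly_deg_le 1 l" "k_sos_mod k (vanishing_ideal S) l"
      then obtain gs where "(\<lambda>x. l x - (\<Sum>g\<leftarrow>gs. (g x)^2)) \<in> vanishing_ideal S"
        unfolding k_sos_mod_def by blast
      then have "l p = (\<Sum>g\<leftarrow>gs. (g p)^2)" using p unfolding vanishing_ideal_def by auto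
      moreover have "0 \<le> (\<Sum>g\<leftarrow>gs. (g p)^2)" by (rule sum_list_nonneg) auto
      ultimately show "0 \<le> l p" by simp
    qed
  qed
qed

(* Every theta body of I(S) lies in the affine hull of S: a point off the affine hull
   is cut off by an affine function vanishing on S, taken with the appropriate sign. *)
lemma theta_body_subset_affine_hull:
  "theta_body k (vanishing_ideal S) \<subseteq> affine hull S"
proof
  fix p assume p: "p \<in> theta_body k (vanishing_ideal S)"
  show "p \<in> affine hull S"
  proof (rule ccontr)
    assume "p \<notin> affine hull S"
    obtain \<F> where F: "affine hull S = \<Inter>\<F>"
      "\<And>h. h \<in> \<F> \<Longrightarrow> \<exists>a b. a \<noteq> 0 \<and> h = {x. a \<bullet> x = b}"
      using affine_hull_finite_intersection_hyperplanes[of S] by metis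
    obtain h where h: "h \<in> \<F>" "p \<notin> h" using \<open>p \<notin> affine hull S\<close> F(1) by blast
    obtain a b where ab: "h = {x. a \<bullet> x = b}" using F(2)[OF h(1)] by blast
    have Sh: "S \<subseteq> h" using F(1) h(1) hull_subset[of S affine] by blast
    define \<sigma> :: real where "\<sigma> = (if a \<bullet> p < b then 1 else -1)"
    define l where "l x = (- (\<sigma> * b)) + (\<sigma> *\<^sub>R a) \<bullet> x" for x
    have l1: "poly_deg_le 1 l" unfolding l_def by (rule poly_affine)
    have "k_sos_mod k (vanishing_ideal S) l"
      by (rule k_sos_mod_vanishing[OF l1]) (use Sh ab in \<open>auto simp: l_def\<close>)
    then have "0 \<le> l p" by (rule theta_body_nonneg[OF p l1])
    moreover have "l p < 0" using h(2) ab unfolding l_def \<sigma>_def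
      by (auto simp: mult_less_0_iff algebra_simps)
    ultimately show False by simp
  qed
qed

lemma theta_body_satisfies_level_inequality:
  fixes S :: "(real^'n::finite) set"
  assumes k: "k \<ge> 1" and finS: "finite S" and valid: "\<And>x. x \<in> S \<Longrightarrow> a \<bullet> x \<le> b"
    and B: "finite B" "card B \<le> k" "S \<subseteq> {x. a \<bullet> x = b} \<union> (\<Union>c\<in>B. {x. a \<bullet> x = c})"
    and p: "p \<in> theta_body k (vanishing_ideal S)"
  shows "a \<bullet> p \<le> b"
proof -
  define l where "l x = b + (- a) \<bullet> x" for x
  have l1: "poly_deg_le 1 l" unfolding l_def by (rule poly_affine)
  have slack_values: "l ` S \<subseteq> insert 0 ((\<lambda>c. b - c) ` B)"
    using B(3) unfolding l_def by auto
  have "card (l ` S) \<le> card (insert 0 ((\<lambda>c. b - c) ` B))"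
    by (rule card_mono[OF _ slack_values]) (use B(1) in simp)
  also have "\<dots> \<le> Suc (card ((\<lambda>c. b - c) ` B))" by (rule card_insert_le_m1) simp_all
  also have "\<dots> \<le> k + 1" using card_image_le[OF B(1), of "\<lambda>c. b - c"] B(2) by simp
  finally have card: "card (l ` S) \<le> k + 1" .
  obtain g where g: "poly_deg_le k g" "\<And>x. x \<in> S \<Longrightarrow> (g x)^2 = l x"
    by (rule sqrt_interpolation[OF l1 _ card]) (use finS valid in \<open>auto simp: l_def\<close>)
  have "k_sos_mod k (vanishing_ideal S) l"
    by (rule k_sos_mod_square[OF g(1) poly_mono[OF l1]]) (use k g(2) in auto)
  then have "0 \<le> l p" by (rule theta_body_nonneg[OF p l1])
  then show ?thesis by (simp add: l_def)
qed

(* The facet is where the segment from a relative interior point to p leaves P. *)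
lemma polytope_point_outside_violates_facet:
  fixes P :: "(real^'n::finite) set"
  assumes poly: "polytope P" and aff: "p \<in> affine hull P" and pP: "p \<notin> P"
  obtains F where "F facet_of P"
    "\<And>a b. P \<subseteq> {x. a \<bullet> x \<le> b} \<Longrightarrow> F = P \<inter> {x. a \<bullet> x = b} \<Longrightarrow> b < a \<bullet> p"
proof -
  obtain q where q: "q \<in> rel_interior P"
    using rel_interior_eq_empty[OF polytope_imp_convex[OF poly]] aff by fastforce
  have qP: "q \<in> P" using q rel_interior_subset by blast
  obtain d where d0: "0 < d" and dz: "q + d *\<^sub>R (p - q) \<in> rel_frontier P"
    and di: "\<And>e. \<lbrakk>0 \<le> e; e < d\<rbrakk> \<Longrightarrow> q + e *\<^sub>R (p - q) \<in> rel_interior P"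
    using ray_to_rel_frontier[OF polytope_imp_bounded[OF poly] q, of "p - q"] aff qP pP by auto
  define z where "z = q + d *\<^sub>R (p - q)"
  have d1: "d < 1"
  proof -
    have "d \<noteq> 1"
      using dz pP closure_closed[OF polytope_imp_closed[OF poly]]
      unfolding rel_frontier_def by auto
    moreover have "\<not> 1 < d" using di[of 1] pP rel_interior_subset by force
    ultimately show ?thesis by linarith
  qed
  have "z \<in> \<Union> {F. F facet_of P}"
    using dz rel_frontier_of_polyhedron[OF polytope_imp_polyhedron[OF poly]] z_def by simp
  then obtain F where F: "F facet_of P" "z \<in> F" by blast
  have "b < a \<bullet> p" if ab: "P \<subseteq> {x. a \<bullet> x \<le> b}" "F = P \<inter> {x. a \<bullet> x = b}" for a b
  proof -
    have "F \<noteq> P" using F(1) by auto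
    then have "q \<notin> F"
      using face_of_disjoint_rel_interior[OF facet_of_imp_face_of[OF F(1)]] q by blast
    then have aq: "a \<bullet> q < b" using qP ab by force
    have "b = a \<bullet> q + d * (a \<bullet> p - a \<bullet> q)"
      using F(2) ab(2) unfolding z_def by (simp add: inner_add_right inner_diff_right)
    then have "0 < d * (a \<bullet> p - a \<bullet> q)" and "d * (a \<bullet> p - a \<bullet> q) < a \<bullet> p - a \<bullet> q"
      using aq d0 d1 by (simp_all add: zero_less_mult_iff mult_less_cancel_right2)
    then show ?thesis using \<open>b = _\<close> by linarith
  qed
  then show ?thesis using F(1) that by blast
qed

(* The hard inclusion TH_k(I(S)) <= conv S for the vertex set S of a polytope each of
   whose facet inequalities a.x <= b leaves the vertices on at most k hyperplanes
   parallel to the facet hyperplane: by the two previous lemmas a point of TH_k(I(S))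
   outside P would both violate and satisfy some facet inequality. *)
lemma theta_body_subset_level_polytope:
  fixes S :: "(real^'n::finite) set"
  assumes k: "k \<ge> 1" and finS: "finite S" and PS: "P = convex hull S"
    and level: "\<And>F. F facet_of P \<Longrightarrow> \<exists>a b. P \<subseteq> {x. a \<bullet> x \<le> b} \<and> F = P \<inter> {x. a \<bullet> x = b} \<and>
      (\<exists>B. finite B \<and> card B \<le> k \<and> S \<subseteq> {x. a \<bullet> x = b} \<union> (\<Union>c\<in>B. {x. a \<bullet> x = c}))"
  shows "theta_body k (vanishing_ideal S) \<subseteq> P"
proof
  fix p assume p: "p \<in> theta_body k (vanishing_ideal S)"
  show "p \<in> P"
  proof (rule ccontr)
    assume pP: "p \<notin> P"
    have poly: "polytope P" unfolding polytope_def using PS finS by blast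
    have aff: "p \<in> affine hull P"
      using theta_body_subset_affine_hull p PS affine_hull_convex_hull by blast
    obtain F where F: "F facet_of P"
      "\<And>a b. P \<subseteq> {x. a \<bullet> x \<le> b} \<Longrightarrow> F = P \<inter> {x. a \<bullet> x = b} \<Longrightarrow> b < a \<bullet> p"
      using polytope_point_outside_violates_facet[OF poly aff pP] by blast
    obtain a b B where ab: "P \<subseteq> {x. a \<bullet> x \<le> b}" "F = P \<inter> {x. a \<bullet> x = b}"
      and B: "finite B" "card B \<le> k" "S \<subseteq> {x. a \<bullet> x = b} \<union> (\<Union>c\<in>B. {x. a \<bullet> x = c})"
      using level[OF F(1)] by blast
    have "\<And>x. x \<in> S \<Longrightarrow> a \<bullet> x \<le> b" using ab(1) PS hull_subset[of S convex] by blast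
    then have "a \<bullet> p \<le> b" by (rule theta_body_satisfies_level_inequality[OF k finS _ B p])
    then show False using F(2)[OF ab] by simp
  qed
qed

theorem mainTheorem16:
  fixes P S :: "(real^'n) set" and k :: nat
  assumes "k \<ge> 1"
    and "m_level (k + 1) P"
    and "S = {v. v extreme_point_of P}"
  shows "TH_exact k (vanishing_ideal S) \<and> theta_body k (vanishing_ideal S) = convex hull S"
proof -
  have "polytope P" using assms(2) unfolding m_level_def by blast
  then obtain V where finV: "finite V" and PV: "P = convex hull V" unfolding polytope_def by blast
  have finS: "finite S"
    using extreme_points_of_convex_hull[of V] finite_subset finV PV assms(3) by auto
  have PS: "P = convex hull S" using Krein_Milman_polytope[OF finV] PV assms(3) by simp
  have level: "\<And>F. F facet_of P \<Longrightarrow> \<exists>a b. P \<subseteq> {x. a \<bullet> x \<le> b} \<and> F = P \<inter> {x. a \<bullet> x = b} \<and>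
      (\<exists>B. finite B \<and> card B \<le> k \<and> S \<subseteq> {x. a \<bullet> x = b} \<union> (\<Union>c\<in>B. {x. a \<bullet> x = c}))"
    using assms(2) unfolding m_level_def assms(3) by (simp only: add_diff_cancel_right') blast
  have "theta_body k (vanishing_ideal S) \<subseteq> P"
    by (rule theta_body_subset_level_polytope[OF assms(1) finS PS level])
  then have theta: "theta_body k (vanishing_ideal S) = convex hull S"
    using convex_hull_subset_theta_body PS by blast
  have "closure (convex hull (real_zero_set (vanishing_ideal S))) = convex hull S"
    using real_zero_set_vanishing_ideal[OF finS] finS
    by (simp add: closure_closed compact_imp_closed compact_convex_hull finite_imp_compact)
  then show ?thesis using theta unfolding TH_exact_def by simp
qed

end
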